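(* Let $n\in\mathbb N$ and let $f(z)=\sum_{j\ge0}a_jz^j$ be extremal for $M_n$, normalized so that $a_0>0$ and $a_n>0$. Let $P(z)=a_n+2\sum_{j=1}^na_{n-j}z^j$. If $\mathrm{Re}\,P$ vanishes at $n$ distinct points $z_1,\dots,z_n\in\partial\mathbb D$, then \[f(z)\equiv a_0\prod_{j=1}^n(1-z_jz)^2 \pmod{z^{n+1}},\] $\prod_{j=1}^nz_j=(-1)^n$, and \[a_n=a_0\Big(2+\sum_{k=1}^{n-1}|e_k(z_1,\dots,z_n)|^2\Big),\] where $e_k$ is the $k$th elementary symmetric polynomial in $n$ variables.
   Context: $\mathbb D$ is the open unit disc; $\mathcal B_0=\{f$ holomorphic on $\mathbb D: 0<|f|\le1\}$; $M_n(f)=\mathrm{Re}\,a_n$; $f\in\mathcal B_0$ is extremal for $M_n$ if $M_n(f)\ge M_n(F)$ for all $F\in\mathcal B_0$. "$F\equiv G \pmod{z^{n+1}}$" means the Taylor coefficients of $F$ and $G$ at $0$ of orders $0,\dots,n$ agree. *)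

theory Defs
  imports "HOL-Complex_Analysis.Complex_Analysis" "HOL-Computational_Algebra.Polynomial"
begin

definition taylor_coeff :: "(complex \<Rightarrow> complex) \<Rightarrow> nat \<Rightarrow> complex" where
  "taylor_coeff f k = (deriv ^^ k) f 0 / of_nat (fact k)"

definition B0 :: "(complex \<Rightarrow> complex) set" where
  "B0 = {f. f holomorphic_on ball 0 1 \<and> (\<forall>z\<in>ball 0 1. 0 < norm (f z) \<and> norm (f z) \<le> 1)}"

definition M :: "nat \<Rightarrow> (complex \<Rightarrow> complex) \<Rightarrow> real" where
  "M n f = Re (taylor_coeff f n)"

definition extremal :: "nat \<Rightarrow> (complex \<Rightarrow> complex) \<Rightarrow> bool" where
  "extremal n f \<longleftrightarrow> f \<in> B0 \<and> (\<forall>F\<in>B0. M n F \<le> M n f)"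

definition esym :: "nat \<Rightarrow> nat \<Rightarrow> (nat \<Rightarrow> complex) \<Rightarrow> complex" where
  "esym n k z = (\<Sum>S\<in>{S. S \<subseteq> {1..n} \<and> card S = k}. \<Prod>j\<in>S. z j)"

end

theory Submission
  imports Defs
begin

text \<open>
  For \<open>|w| = 1\<close> and \<open>0 < r < 1\<close> the factor \<open>g(z) = (1 + r)/2 \<cdot> (1 - wz)/(1 - rwz)\<close> is
  zero-free with \<open>|g| \<le> 1\<close> on the disc, so \<open>g f\<close> competes with the extremal \<open>f\<close>; comparing
  \<open>n\<close>-th coefficients and letting \<open>r \<rightarrow> 1\<close> gives \<open>Re P \<ge> 0\<close> on the unit circle.
  There \<open>x\<^sup>n Re P(x) = Q(x)\<close> for a polynomial \<open>Q\<close> of degree \<open>2n\<close> whose coefficient of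
  \<open>x\<^bsup>2n-k\<^esup>\<close> is \<open>a\<^sub>k\<close> for \<open>k \<le> n\<close>. Each zero \<open>z\<^sub>j\<close> of \<open>Re P\<close> is a minimum on the circle,
  hence a double zero of \<open>Q\<close>, and counting degrees gives \<open>Q = a\<^sub>0 \<Prod>(x - z\<^sub>j)\<^sup>2\<close>;
  reflecting this polynomial yields the congruence for \<open>f\<close>. At a point \<open>w\<close> of the circle
  off the \<open>z\<^sub>j\<close> we have \<open>(w - z\<^sub>j)\<^sup>2 = -w z\<^sub>j |w - z\<^sub>j|\<^sup>2\<close>, so \<open>Re P(w) \<ge> 0\<close> forces
  \<open>\<Prod>(-z\<^sub>j) = 1\<close>. Finally \<open>a\<^sub>n\<close> is \<open>a\<^sub>0\<close> times the middle coefficient of \<open>(\<Prod>(1 - z\<^sub>j x))\<^sup>2\<close>,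
  which is \<open>\<Sum>|e\<^sub>k|\<^sup>2\<close> because \<open>e\<^bsub>n-k\<^esub> = e\<^sub>n conj(e\<^sub>k)\<close> for unimodular \<open>z\<^sub>j\<close>.
\<close>

section \<open>Elementary symmetric polynomials\<close>

lemma prod_monom: "(\<Prod>j\<in>S. monom (c j) (d j)) = monom (\<Prod>j\<in>S. c j) (\<Sum>j\<in>S. d j)"
  by (induction S rule: infinite_finite_induct) (simp_all add: mult_monom)

lemma coeff_prod_esym: "coeff (\<Prod>j=1..n. [:1, - z j:]) k = (-1) ^ k * esym n k z"
proof -
  have "(\<Prod>j=1..n. [:1, - z j:]) = (\<Prod>j=1..n. monom (- z j) 1 + 1)"
    by (intro prod.cong) (simp_all add: monom_altdef one_pCons)
  also have "\<dots> = (\<Sum>S\<in>Pow {1..n}. monom (\<Prod>j\<in>S. - z j) (card S))"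
    by (simp add: prod_add prod_monom)
  finally have "coeff (\<Prod>j=1..n. [:1, - z j:]) k
      = (\<Sum>S\<in>Pow {1..n}. if card S = k then (\<Prod>j\<in>S. - z j) else 0)"
    by (simp add: coeff_sum)
  also have "\<dots> = (\<Sum>S | S \<subseteq> {1..n} \<and> card S = k. \<Prod>j\<in>S. - z j)"
    by (simp add: sum.inter_filter[symmetric] Pow_def)
  also have "\<dots> = (-1) ^ k * esym n k z"
    by (auto simp: esym_def sum_distrib_left prod_uminus intro!: sum.cong)
  finally show ?thesis .
qed

lemma esym_0: "esym n 0 z = 1"
proof -
  have "{S. S \<subseteq> {1..n} \<and> card S = 0} = {{}}"
    by (auto dest: finite_subset)
  then show ?thesis
    by (simp add: esym_def)
qed

lemma esym_self: "esym n n z = (\<Prod>j=1..n. z j)"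
proof -
  have "{S. S \<subseteq> {1..n} \<and> card S = n} = {{1..n}}"
    using card_subset_eq[of "{1..n}"] by auto
  then show ?thesis
    by (simp add: esym_def)
qed

lemma esym_complement:
  assumes unimodular: "\<forall>j\<in>{1..n}. norm (z j) = 1" and "k \<le> n"
  shows "esym n (n - k) z = esym n n z * cnj (esym n k z)"
proof -
  have prod_complement: "(\<Prod>j\<in>{1..n} - S. z j) = esym n n z * cnj (\<Prod>j\<in>S. z j)"
    if S: "S \<subseteq> {1..n}" for S
  proof -
    have "norm (\<Prod>j\<in>S. z j) = 1"
      using S unimodular by (auto simp: prod_norm[symmetric] intro!: prod.neutral)
    then have "(\<Prod>j\<in>S. z j) * cnj (\<Prod>j\<in>S. z j) = 1"
      using complex_norm_square[of "\<Prod>j\<in>S. z j"] by simp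
    moreover have "esym n n z = (\<Prod>j\<in>{1..n} - S. z j) * (\<Prod>j\<in>S. z j)"
      using S by (simp add: esym_self prod.subset_diff)
    ultimately show ?thesis
      by (metis mult.assoc mult_1_right)
  qed
  have "esym n (n - k) z = (\<Sum>S | S \<subseteq> {1..n} \<and> card S = k. \<Prod>j\<in>{1..n} - S. z j)"
    unfolding esym_def
    by (rule sum.reindex_bij_witness[of _ "\<lambda>S. {1..n} - S" "\<lambda>S. {1..n} - S"])
       (use \<open>k \<le> n\<close> in \<open>auto simp: card_Diff_subset finite_subset double_diff\<close>)
  also have "\<dots> = esym n n z * cnj (esym n k z)"
    unfolding esym_def[of n k] cnj_sum sum_distrib_left
    by (intro sum.cong refl prod_complement) auto
  finally show ?thesis .
qed

lemma coeff_square_prod_esym: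
  assumes unimodular: "\<forall>j\<in>{1..n}. norm (z j) = 1"
  shows "coeff ((\<Prod>j=1..n. [:1, - z j:]) ^ 2) n
           = (-1) ^ n * esym n n z * of_real (\<Sum>k\<le>n. (norm (esym n k z))\<^sup>2)"
proof -
  have summand: "coeff (\<Prod>j=1..n. [:1, - z j:]) k * coeff (\<Prod>j=1..n. [:1, - z j:]) (n - k)
      = (-1) ^ n * esym n n z * of_real ((norm (esym n k z))\<^sup>2)" if "k \<le> n" for k
  proof -
    have "coeff (\<Prod>j=1..n. [:1, - z j:]) k * coeff (\<Prod>j=1..n. [:1, - z j:]) (n - k)
        = ((-1) ^ k * (-1) ^ (n - k)) * (esym n k z * esym n (n - k) z)"
      unfolding coeff_prod_esym by (simp only: mult_ac)
    also have "\<dots> = (-1) ^ n * esym n n z * (esym n k z * cnj (esym n k z))"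
      using that by (simp add: esym_complement[OF unimodular] mult_ac flip: power_add)
    finally show ?thesis
      by (simp only: complex_norm_square)
  qed
  have "coeff ((\<Prod>j=1..n. [:1, - z j:]) ^ 2) n
      = (\<Sum>k\<le>n. coeff (\<Prod>j=1..n. [:1, - z j:]) k * coeff (\<Prod>j=1..n. [:1, - z j:]) (n - k))"
    by (simp add: power2_eq_square coeff_mult)
  also have "\<dots> = (-1) ^ n * esym n n z * of_real (\<Sum>k\<le>n. (norm (esym n k z))\<^sup>2)"
    unfolding sum_distrib_left of_real_sum by (intro sum.cong refl summand) simp
  finally show ?thesis .
qed

lemma sum_norm_esym_eq:
  assumes "n \<ge> 1" and "norm (esym n n z) = 1"
  shows "(\<Sum>k\<le>n. (norm (esym n k z))\<^sup>2) = 2 + (\<Sum>k=1..n-1. (norm (esym n k z))\<^sup>2)"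
proof -
  obtain m where n: "n = Suc m"
    using assms(1) by (cases n) auto
  have "(\<Sum>k\<le>n. (norm (esym n k z))\<^sup>2)
      = (norm (esym n 0 z))\<^sup>2 + (\<Sum>k=1..m. (norm (esym n k z))\<^sup>2) + (norm (esym n n z))\<^sup>2"
    by (simp add: n atMost_atLeast0 sum.atLeast_Suc_atMost)
  then show ?thesis
    using assms(2) by (simp add: esym_0 n)
qed

section \<open>Polynomials with prescribed double roots\<close>

lemma power2_linear_dvd_if_double_root:
  fixes p :: "'a::idom poly"
  assumes "poly p a = 0" and "poly (pderiv p) a = 0"
  shows "[:-a, 1:] ^ 2 dvd p"
proof -
  obtain q where q: "p = [:-a, 1:] * q"
    using assms(1) poly_eq_0_iff_dvd by blast
  have "pderiv p = q + [:-a, 1:] * pderiv q"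
    unfolding q pderiv_mult by (simp add: pderiv_pCons)
  then have "poly q a = 0"
    using assms(2) by simp
  then obtain r where r: "q = [:-a, 1:] * r"
    using poly_eq_0_iff_dvd by blast
  have "p = [:-a, 1:] ^ 2 * r"
    by (simp only: q r power2_eq_square mult.assoc)
  then show ?thesis
    by simp
qed

lemma prod_power2_linear_dvd_if_double_roots:
  fixes p :: "'a::idom poly"
  assumes "finite S" and "inj_on z S"
    and "\<forall>j\<in>S. poly p (z j) = 0 \<and> poly (pderiv p) (z j) = 0"
  shows "(\<Prod>j\<in>S. [:-z j, 1:] ^ 2) dvd p"
  using assms
proof (induction S rule: finite_induct)
  case empty
  then show ?case by simp
next
  case (insert k S)
  let ?D = "\<Prod>j\<in>S. [:-z j, 1:] ^ 2"
  obtain q where q: "p = ?D * q"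
    using insert by auto
  have D_nonzero: "poly ?D (z k) \<noteq> 0"
    using insert.hyps insert.prems(1) by (auto simp: poly_prod inj_on_def)
  have "poly q (z k) = 0"
    using insert.prems(2) D_nonzero by (simp add: q)
  moreover have "poly (pderiv q) (z k) = 0"
    using insert.prems(2) D_nonzero \<open>poly q (z k) = 0\<close> by (simp add: q pderiv_mult)
  ultimately obtain r where "q = [:-z k, 1:] ^ 2 * r"
    using power2_linear_dvd_if_double_root by blast
  then show ?case
    using insert.hyps by (simp add: q mult_ac)
qed

lemma degree_prod_power2_linear:
  fixes z :: "'b \<Rightarrow> 'a::idom"
  shows "finite S \<Longrightarrow> degree (\<Prod>j\<in>S. [:-z j, 1:] ^ 2) = 2 * card S"
  by (simp add: degree_prod_eq_sum_degree degree_power_eq)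

lemma coeff_prod_power2_linear_reflect:
  fixes z :: "'b \<Rightarrow> 'a::idom"
  assumes "finite S" and "k \<le> 2 * card S"
  shows "coeff (\<Prod>j\<in>S. [:-z j, 1:] ^ 2) (2 * card S - k) = coeff ((\<Prod>j\<in>S. [:1, - z j:]) ^ 2) k"
proof -
  have "reflect_poly [:-z j, 1:] = [:1, - z j:]" for j
    by (simp add: reflect_poly_def)
  then have "reflect_poly (\<Prod>j\<in>S. [:-z j, 1:] ^ 2) = (\<Prod>j\<in>S. [:1, - z j:]) ^ 2"
    by (simp add: reflect_poly_prod reflect_poly_power prod_power_distrib)
  then show ?thesis
    using assms by (metis coeff_reflect_poly degree_prod_power2_linear not_less)
qed

lemma eq_smult_prod_power2_linear_if_double_roots:
  fixes p :: "'a::idom poly"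
  assumes "finite S" and "inj_on z S"
    and "\<forall>j\<in>S. poly p (z j) = 0 \<and> poly (pderiv p) (z j) = 0"
    and "degree p \<le> 2 * card S"
  shows "p = smult (coeff p (2 * card S)) (\<Prod>j\<in>S. [:-z j, 1:] ^ 2)"
proof -
  let ?D = "\<Prod>j\<in>S. [:-z j, 1:] ^ 2"
  obtain q where q: "p = ?D * q"
    using prod_power2_linear_dvd_if_double_roots[OF assms(1-3)] by blast
  have degree_D: "degree ?D = 2 * card S"
    using assms(1) by (rule degree_prod_power2_linear)
  have lead_D: "lead_coeff ?D = 1"
    by (simp add: lead_coeff_prod lead_coeff_power)
  have "?D \<noteq> 0"
    using lead_D by auto
  then have "q = 0 \<or> degree q = 0"
    using assms(4) degree_D by (cases "q = 0") (simp_all add: q degree_mult_eq)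
  then obtain c where "q = [:c:]"
    by (metis degree_0_id pCons_0_0)
  then have "p = smult c ?D"
    by (simp add: q mult.commute)
  moreover have "coeff (smult c ?D) (2 * card S) = c"
    using lead_D by (simp only: degree_D coeff_smult mult_1_right)
  ultimately show ?thesis
    by (simp only:)
qed

section \<open>Polynomials that are nonnegative on the unit circle\<close>

lemma power2_diff_unimodular:
  fixes w z :: complex
  assumes "norm w = 1" and "norm z = 1"
  shows "(w - z) ^ 2 = - (w * z) * of_real ((norm (w - z))\<^sup>2)"
proof -
  have "w * cnj w = 1" and "z * cnj z = 1"
    using assms complex_norm_square[of w] complex_norm_square[of z] by simp_all
  then have "- (w * z) * ((w - z) * cnj (w - z)) = (w - z) ^ 2"
    by (simp add: power2_eq_square algebra_simps)
  then show ?thesis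
    by (simp only: complex_norm_square)
qed

lemma poly_prod_power2_linear_unimodular:
  fixes z :: "'b \<Rightarrow> complex" and x :: complex
  assumes "finite S" and "\<forall>j\<in>S. norm (z j) = 1" and "norm x = 1"
  shows "poly (\<Prod>j\<in>S. [:-z j, 1:] ^ 2) x
           = x ^ card S * (\<Prod>j\<in>S. - z j) * of_real (\<Prod>j\<in>S. (norm (x - z j))\<^sup>2)"
proof -
  have "poly (\<Prod>j\<in>S. [:-z j, 1:] ^ 2) x = (\<Prod>j\<in>S. x * - z j * of_real ((norm (x - z j))\<^sup>2))"
    unfolding poly_prod using assms by (intro prod.cong) (simp_all add: power2_diff_unimodular)
  also have "\<dots> = x ^ card S * (\<Prod>j\<in>S. - z j) * of_real (\<Prod>j\<in>S. (norm (x - z j))\<^sup>2)"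
    by (simp only: prod.distrib prod_constant of_real_prod)
  finally show ?thesis .
qed

lemma infinite_unit_circle: "infinite (sphere (0::complex) 1)"
proof
  assume "finite (sphere (0::complex) 1)"
  moreover have "connected (sphere (0::complex) 1)"
    by (simp add: connected_sphere)
  moreover have "1 \<in> sphere (0::complex) 1" and "-1 \<in> sphere (0::complex) 1"
    by simp_all
  ultimately show False
    using connected_finite_iff_sing by (metis empty_iff singletonD one_neq_neg_one)
qed

lemma unimodular_avoiding_finite:
  fixes A :: "complex set"
  assumes "finite A"
  obtains w where "norm w = 1" and "w \<notin> A"
proof -
  have "infinite (sphere 0 1 - A)"
    using infinite_unit_circle assms by simp
  then obtain w where "w \<in> sphere 0 1 - A"
    by (metis ex_in_conv finite.emptyI)
  then show ?thesis
    by (intro that) auto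
qed

lemma prod_eq_neg_one_power_if_nonneg_on_circle:
  fixes c :: real and \<phi> :: "complex \<Rightarrow> real"
  assumes "finite S" and unimodular: "\<forall>j\<in>S. norm (z j) = 1" and "c > 0"
    and on_circle: "\<forall>x. norm x = 1 \<longrightarrow>
          poly (smult (of_real c) (\<Prod>j\<in>S. [:-z j, 1:] ^ 2)) x = x ^ card S * of_real (\<phi> x)"
    and nonneg: "\<forall>x. norm x = 1 \<longrightarrow> \<phi> x \<ge> 0"
  shows "(\<Prod>j\<in>S. z j) = (-1) ^ card S"
proof -
  obtain w where w: "norm w = 1" "w \<notin> z ` S"
    using unimodular_avoiding_finite[of "z ` S"] \<open>finite S\<close> by blast
  define d where "d = (\<Prod>j\<in>S. (norm (w - z j))\<^sup>2)"
  have "d > 0"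
    unfolding d_def using w(2) by (intro prod_pos) auto
  have "w ^ card S * of_real (\<phi> w) = poly (smult (of_real c) (\<Prod>j\<in>S. [:-z j, 1:] ^ 2)) w"
    using on_circle w(1) by simp
  also have "\<dots> = w ^ card S * ((\<Prod>j\<in>S. - z j) * of_real (c * d))"
    unfolding poly_smult poly_prod_power2_linear_unimodular[OF \<open>finite S\<close> unimodular w(1)] d_def
    by (simp add: mult_ac)
  finally have "w ^ card S * of_real (\<phi> w) = w ^ card S * ((\<Prod>j\<in>S. - z j) * of_real (c * d))" .
  then have prod_eq: "(\<Prod>j\<in>S. - z j) = of_real (\<phi> w / (c * d))"
    using w(1) \<open>c > 0\<close> \<open>d > 0\<close> by (auto simp: field_simps)
  have "norm (\<Prod>j\<in>S. - z j) = 1"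
    using unimodular by (simp add: prod_norm[symmetric])
  then have "\<bar>\<phi> w / (c * d)\<bar> = 1"
    by (simp only: prod_eq norm_of_real)
  moreover have "\<phi> w / (c * d) \<ge> 0"
    using nonneg w(1) \<open>c > 0\<close> \<open>d > 0\<close> by simp
  ultimately have "\<phi> w / (c * d) = 1"
    by (simp only: abs_of_nonneg)
  then have "(-1) ^ card S * ((-1) ^ card S * (\<Prod>j\<in>S. z j)) = (-1) ^ card S"
    unfolding prod_eq[unfolded prod_uminus] by (simp only: of_real_1 mult_1_right)
  then show ?thesis
    by (simp add: mult.assoc[symmetric] power_add[symmetric])
qed

lemma poly_pderiv_eq_0_if_nonneg_on_circle:
  fixes p :: "complex poly" and \<phi> :: "complex \<Rightarrow> real"
  assumes on_circle: "\<forall>x. norm x = 1 \<longrightarrow> poly p x = x ^ n * of_real (\<phi> x)"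
    and nonneg: "\<forall>x. norm x = 1 \<longrightarrow> \<phi> x \<ge> 0"
    and z: "norm z = 1" and root: "poly p z = 0"
  shows "poly (pderiv p) z = 0"
proof -
  define \<gamma> where "\<gamma> = (\<lambda>s. z * exp (\<i> * s))"
  define \<Psi> where "\<Psi> = (\<lambda>s. poly p (\<gamma> s) / \<gamma> s ^ n)"
  \<comment> \<open>On the real axis \<open>\<Psi>\<close> is real, nonnegative and zero at \<open>0\<close>, so its derivative there vanishes.\<close>
  define L where "L = poly (pderiv p) z * (z * \<i>) / z ^ n"
  have unimodular: "norm (\<gamma> (of_real \<theta>)) = 1" for \<theta> :: real
    using z by (simp add: \<gamma>_def norm_mult)
  have "(\<Psi> has_field_derivative L) (at 0)"
  proof -
    have "(\<gamma> has_field_derivative z * \<i>) (at 0)"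
      unfolding \<gamma>_def by (auto intro!: derivative_eq_intros)
    moreover have "\<gamma> 0 = z"
      by (simp add: \<gamma>_def)
    ultimately have "((\<lambda>s. poly p (\<gamma> s)) has_field_derivative poly (pderiv p) z * (z * \<i>)) (at 0)"
      using DERIV_chain2[OF poly_DERIV] by metis
    then show ?thesis
      unfolding \<Psi>_def L_def using z
      by (auto intro!: derivative_eq_intros simp: \<gamma>_def root)
  qed
  then have derivative: "((\<lambda>x. \<Psi> (of_real x)) has_vector_derivative L) (at 0)"
    using has_vector_derivative_real_field[of \<Psi> L 0] by simp
  have \<Psi>_real: "\<Psi> (of_real \<theta>) = of_real (\<phi> (\<gamma> (of_real \<theta>)))" for \<theta> :: real
    using on_circle unimodular[of \<theta>] by (auto simp: \<Psi>_def)
  have "Im L = 0"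
  proof -
    have "((\<lambda>x. Im (\<Psi> (of_real x))) has_field_derivative Im L) (at 0)"
      by (rule has_field_derivative_Im[OF derivative])
    then have "((\<lambda>x::real. 0) has_field_derivative Im L) (at 0)"
      by (simp add: \<Psi>_real)
    then show ?thesis
      using DERIV_unique[OF _ DERIV_const] by blast
  qed
  moreover have "Re L = 0"
  proof (rule DERIV_local_min)
    show "((\<lambda>x. Re (\<Psi> (of_real x))) has_field_derivative Re L) (at 0)"
      by (rule has_field_derivative_Re[OF derivative])
    have "\<Psi> (of_real 0) = 0"
      by (simp add: \<Psi>_def \<gamma>_def root)
    moreover have "Re (\<Psi> (of_real y)) \<ge> 0" for y
      using nonneg unimodular by (simp add: \<Psi>_real)
    ultimately show "\<forall>y. \<bar>0 - y\<bar> < 1 \<longrightarrow> Re (\<Psi> (of_real 0)) \<le> Re (\<Psi> (of_real y))"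
      by simp
  qed simp
  ultimately have "L = 0"
    by (simp add: complex_eq_iff)
  then show ?thesis
    using z by (auto simp: L_def)
qed

section \<open>The polynomials P and Q\<close>

definition P_fun :: "(nat \<Rightarrow> complex) \<Rightarrow> nat \<Rightarrow> complex \<Rightarrow> complex" where
  "P_fun a n x = a n + 2 * (\<Sum>i=1..n. a (n - i) * x ^ i)"

definition Q_poly :: "(nat \<Rightarrow> complex) \<Rightarrow> nat \<Rightarrow> complex poly" where
  "Q_poly a n = monom (a n) n + (\<Sum>i=1..n. monom (a (n - i)) (n + i) + monom (cnj (a (n - i))) (n - i))"

lemma degree_Q_poly: "degree (Q_poly a n) \<le> 2 * n"
  unfolding Q_poly_def
  by (intro degree_add_le degree_sum_le order.trans[OF degree_monom_le]) auto

lemma coeff_Q_poly: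
  assumes "k \<le> n"
  shows "coeff (Q_poly a n) (2 * n - k) = a k"
proof -
  have "coeff (Q_poly a n) (n + (n - k))
      = (if n - k = 0 then a n else 0) + (\<Sum>i=1..n. if i = n - k then a (n - i) else 0)"
    unfolding Q_poly_def coeff_add coeff_sum coeff_monom
    by (intro arg_cong2[where f = "(+)"] sum.cong) auto
  also have "\<dots> = a k"
    using assms by auto
  finally show ?thesis
    using assms by (simp add: mult_2)
qed

lemma poly_Q_poly_unimodular:
  assumes "Im (a n) = 0" and "norm x = 1"
  shows "poly (Q_poly a n) x = x ^ n * of_real (Re (P_fun a n x))"
proof -
  have "x * cnj x = 1"
    using assms(2) complex_norm_square[of x] by simp
  have power_cnj: "x ^ n * cnj x ^ i = x ^ (n - i)" if "i \<le> n" for i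
  proof -
    have "x ^ n * cnj x ^ i = x ^ (n - i) * (x * cnj x) ^ i"
      using that by (simp add: power_mult_distrib flip: power_add)
    then show ?thesis
      using \<open>x * cnj x = 1\<close> by simp
  qed
  have "of_real (Re (P_fun a n x)) = (P_fun a n x + cnj (P_fun a n x)) / 2"
    by (simp add: complex_add_cnj)
  also have "\<dots> = a n + (\<Sum>i=1..n. a (n - i) * x ^ i) + (\<Sum>i=1..n. cnj (a (n - i)) * cnj x ^ i)"
    using assms(1) by (simp add: P_fun_def complex_eq_iff)
  finally have "x ^ n * of_real (Re (P_fun a n x))
      = a n * x ^ n + (\<Sum>i=1..n. a (n - i) * (x ^ n * x ^ i))
        + (\<Sum>i=1..n. cnj (a (n - i)) * (x ^ n * cnj x ^ i))"
    by (simp add: algebra_simps sum_distrib_left)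
  also have "\<dots> = a n * x ^ n + (\<Sum>i=1..n. a (n - i) * x ^ (n + i))
        + (\<Sum>i=1..n. cnj (a (n - i)) * x ^ (n - i))"
    by (intro arg_cong2[where f = "(+)"] sum.cong refl) (auto simp: power_cnj power_add)
  also have "\<dots> = poly (Q_poly a n) x"
    by (simp add: Q_poly_def poly_sum poly_monom sum.distrib)
  finally show ?thesis ..
qed

section \<open>The variational inequality\<close>

lemma norm_one_minus_le:
  fixes r :: real and u :: complex
  assumes "0 < r" and "r < 1" and "norm u < 1"
  shows "(1 + r) * norm (1 - u) \<le> 2 * norm (1 - of_real r * u)"
proof -
  define x y where "x = Re u" and "y = Im u"
  have inside: "x\<^sup>2 + y\<^sup>2 < 1"
    using assms(3) by (simp add: x_def y_def cmod_def)
  then have "x\<^sup>2 < 1"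
    using zero_le_power2[of y] by linarith
  then have "\<bar>x\<bar> < 1"
    by (simp add: abs_square_less_1)
  have "4 * ((1 - r * x)\<^sup>2 + (r * y)\<^sup>2) - (1 + r)\<^sup>2 * ((1 - x)\<^sup>2 + y\<^sup>2)
      = (1 - r) * ((3 + r) + 2 * x * (1 - r) - (x\<^sup>2 + y\<^sup>2) * (1 + 3 * r))"
    by (simp add: algebra_simps power2_eq_square)
  also have "\<dots> \<ge> 0"
  proof -
    have "(x\<^sup>2 + y\<^sup>2) * (1 + 3 * r) \<le> 1 * (1 + 3 * r)"
      using inside assms(1) by (intro mult_right_mono) simp_all
    moreover have "x * (1 - r) \<ge> -1 * (1 - r)"
      using \<open>\<bar>x\<bar> < 1\<close> assms(2) by (intro mult_right_mono) simp_all
    ultimately show ?thesis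
      using assms(2) by (intro mult_nonneg_nonneg) simp_all
  qed
  finally have "(1 + r)\<^sup>2 * ((1 - x)\<^sup>2 + y\<^sup>2) \<le> 4 * ((1 - r * x)\<^sup>2 + (r * y)\<^sup>2)"
    by simp
  moreover have "(norm (1 - u))\<^sup>2 = (1 - x)\<^sup>2 + y\<^sup>2"
    and "(norm (1 - of_real r * u))\<^sup>2 = (1 - r * x)\<^sup>2 + (r * y)\<^sup>2"
    by (simp_all add: cmod_power2 x_def y_def)
  ultimately have "((1 + r) * norm (1 - u))\<^sup>2 \<le> (2 * norm (1 - of_real r * u))\<^sup>2"
    by (simp add: power_mult_distrib)
  then show ?thesis
    by (rule power2_le_imp_le) simp
qed

definition variation_factor :: "real \<Rightarrow> complex \<Rightarrow> complex \<Rightarrow> complex" where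
  "variation_factor r w z = (1 + of_real r) / 2 * ((1 - w * z) / (1 - of_real r * w * z))"

lemma variation_factor_in_disc:
  assumes "0 < r" and "r < 1" and "norm w = 1" and "norm z < 1"
  shows "1 - of_real r * w * z \<noteq> 0" and "variation_factor r w z \<noteq> 0"
    and "norm (variation_factor r w z) \<le> 1"
proof -
  have wz: "norm (w * z) < 1"
    using assms(3,4) by (simp add: norm_mult)
  have "r * norm (w * z) < 1 * 1"
    using assms(1,2) wz by (intro mult_strict_mono) simp_all
  then have "norm (of_real r * w * z) < 1"
    using assms(1) by (simp add: norm_mult mult.assoc)
  then show denominator: "1 - of_real r * w * z \<noteq> 0"
    by auto
  have "norm (1 + complex_of_real r) = 1 + r"
    using assms(1) norm_of_real[of "1 + r"] by simp
  then have "norm (variation_factor r w z) = (1 + r) / 2 * (norm (1 - w * z) / norm (1 - of_real r * w * z))"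
    by (simp only: variation_factor_def norm_mult norm_divide norm_numeral)
  moreover have "1 - w * z \<noteq> 0"
    using wz by auto
  moreover have "(1 + r) * norm (1 - w * z) \<le> 2 * norm (1 - of_real r * w * z)"
    using norm_one_minus_le[OF assms(1,2) wz] by (simp add: mult.assoc)
  ultimately show "variation_factor r w z \<noteq> 0" and "norm (variation_factor r w z) \<le> 1"
    using denominator assms(1) by (auto simp: divide_le_eq)
qed

lemma has_fps_expansion_variation_factor:
  "variation_factor r w has_fps_expansion
     fps_const ((1 + of_real r) / 2) *
       Abs_fps (\<lambda>k. if k = 0 then 1 else (of_real r - 1) * of_real r ^ (k - 1) * w ^ k)"
proof -
  let ?c = "of_real r * w" and ?A = "Abs_fps (\<lambda>k. (of_real r * w) ^ k)"
  have "(\<lambda>z. (1 - w * z) * inverse (1 - ?c * z)) has_fps_expansion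
          (1 - fps_const w * fps_X) * inverse (1 - fps_const ?c * fps_X)"
    by (intro has_fps_expansion_mult has_fps_expansion_cmult_left has_fps_expansion_diff
              has_fps_expansion_inverse has_fps_expansion_1 has_fps_expansion_fps_X) simp_all
  moreover have "inverse (1 - fps_const ?c * fps_X) = ?A"
    using one_minus_const_fps_X_neg_power'[of 1 ?c] by simp
  moreover have "(1 - fps_const w * fps_X) * ?A
      = Abs_fps (\<lambda>k. if k = 0 then 1 else (of_real r - 1) * of_real r ^ (k - 1) * w ^ k)"
  proof (rule fps_ext)
    fix k
    have "((1 - fps_const w * fps_X) * ?A) $ k = ?c ^ k - (if k = 0 then 0 else w * ?c ^ (k - 1))"
      by (simp add: algebra_simps fps_X_mult_nth)
    also have "\<dots> = (if k = 0 then 1 else (of_real r - 1) * of_real r ^ (k - 1) * w ^ k)"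
      by (cases k) (simp_all add: power_mult_distrib algebra_simps)
    finally show "((1 - fps_const w * fps_X) * ?A) $ k
        = Abs_fps (\<lambda>k. if k = 0 then 1 else (of_real r - 1) * of_real r ^ (k - 1) * w ^ k) $ k"
      by simp
  qed
  ultimately have "(\<lambda>z. (1 - w * z) * inverse (1 - ?c * z)) has_fps_expansion
      Abs_fps (\<lambda>k. if k = 0 then 1 else (of_real r - 1) * of_real r ^ (k - 1) * w ^ k)"
    by simp
  moreover have "variation_factor r w = (\<lambda>z. (1 + of_real r) / 2 * ((1 - w * z) * inverse (1 - ?c * z)))"
    by (rule ext) (simp only: variation_factor_def divide_inverse)
  ultimately show ?thesis
    by (simp only: has_fps_expansion_cmult_left)
qed

lemma B0_mult:
  assumes "f \<in> B0" and "g holomorphic_on ball 0 1" and "\<forall>z\<in>ball 0 1. g z \<noteq> 0 \<and> norm (g z) \<le> 1"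
  shows "(\<lambda>z. g z * f z) \<in> B0"
  using assms by (auto simp: B0_def norm_mult intro!: holomorphic_intros mult_le_one)

lemma taylor_coeff_eq_fps_nth: "f has_fps_expansion F \<Longrightarrow> taylor_coeff f k = F $ k"
  by (simp add: taylor_coeff_def fps_nth_fps_expansion)

lemma extremal_variation:
  assumes "extremal n f" and "norm w = 1" and "0 < r" and "r < 1"
  shows "0 \<le> Re (taylor_coeff f n)
              + (1 + r) * Re (\<Sum>k=1..n. taylor_coeff f (n - k) * of_real r ^ (k - 1) * w ^ k)"
proof -
  let ?a = "taylor_coeff f" and ?g = "variation_factor r w"
  define S where "S = (\<Sum>k=1..n. ?a (n - k) * of_real r ^ (k - 1) * w ^ k)"
  have f: "f \<in> B0" and maximal: "\<forall>F\<in>B0. M n F \<le> M n f"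
    using assms(1) by (simp_all add: extremal_def)
  then have f_holomorphic: "f holomorphic_on ball 0 1"
    by (simp add: B0_def)
  have "?g holomorphic_on ball 0 1"
    unfolding variation_factor_def
    using variation_factor_in_disc(1)[OF assms(3,4,2)] by (auto intro!: holomorphic_intros)
  then have "(\<lambda>z. ?g z * f z) \<in> B0"
    using variation_factor_in_disc(2,3)[OF assms(3,4,2)] by (intro B0_mult f) auto
  then have "Re (taylor_coeff (\<lambda>z. ?g z * f z) n) \<le> Re (?a n)"
    using maximal by (auto simp: M_def)
  moreover have coeff_product:
    "taylor_coeff (\<lambda>z. ?g z * f z) n = (1 + of_real r) / 2 * (?a n + (of_real r - 1) * S)"
  proof -
    let ?G = "fps_const ((1 + of_real r) / 2) *
               Abs_fps (\<lambda>k. if k = 0 then 1 else (of_real r - 1) * of_real r ^ (k - 1) * w ^ k)"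
    have f_fps: "f has_fps_expansion fps_expansion f 0"
      using f_holomorphic by (intro has_fps_expansion_fps_expansion[of "ball 0 1"]) auto
    then have "(\<lambda>z. ?g z * f z) has_fps_expansion ?G * fps_expansion f 0"
      by (intro has_fps_expansion_mult has_fps_expansion_variation_factor)
    then have "taylor_coeff (\<lambda>z. ?g z * f z) n = (\<Sum>i=0..n. ?G $ i * fps_expansion f 0 $ (n - i))"
      by (simp only: taylor_coeff_eq_fps_nth fps_mult_nth)
    also have "\<dots> = (\<Sum>i=0..n. (1 + of_real r) / 2
                      * (if i = 0 then 1 else (of_real r - 1) * of_real r ^ (i - 1) * w ^ i) * ?a (n - i))"
      by (simp add: taylor_coeff_eq_fps_nth[OF f_fps])
    also have "\<dots> = (1 + of_real r) / 2 * ?a n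
        + (\<Sum>i=1..n. (1 + of_real r) / 2 * ((of_real r - 1) * of_real r ^ (i - 1) * w ^ i) * ?a (n - i))"
      by (simp add: sum.atLeast_Suc_atMost)
    also have "\<dots> = (1 + of_real r) / 2 * (?a n + (of_real r - 1) * S)"
      by (simp only: S_def sum_distrib_left distrib_left mult_ac)
    finally show ?thesis .
  qed
  moreover have "Re ((1 + of_real r) / 2 * (?a n + (of_real r - 1) * S))
      = (1 + r) / 2 * (Re (?a n) - (1 - r) * Re S)"
    by (simp add: field_simps)
  ultimately have "(1 + r) / 2 * (Re (?a n) - (1 - r) * Re S) \<le> Re (?a n)"
    by (simp only: coeff_product)
  moreover have "(1 - r) * (Re (?a n) + (1 + r) * Re S)
      = 2 * (Re (?a n) - (1 + r) / 2 * (Re (?a n) - (1 - r) * Re S))"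
    by (simp add: field_simps)
  ultimately have "0 \<le> (1 - r) * (Re (?a n) + (1 + r) * Re S)"
    by (simp only:) simp
  then show ?thesis
    using assms(4) by (simp add: S_def zero_le_mult_iff)
qed

lemma extremal_Re_P_fun_nonneg:
  assumes "extremal n f" and "norm w = 1"
  shows "Re (P_fun (taylor_coeff f) n w) \<ge> 0"
proof -
  let ?a = "taylor_coeff f"
  define h where
    "h r = Re (?a n) + (1 + r) * Re (\<Sum>k=1..n. ?a (n - k) * of_real r ^ (k - 1) * w ^ k)" for r :: real
  have "(h \<longlongrightarrow> h 1) (at_left 1)"
    unfolding h_def by (intro tendsto_intros)
  moreover have "eventually (\<lambda>r. r \<in> {0<..<1}) (at_left (1::real))"
    by (rule eventually_at_left_real) simp
  then have "eventually (\<lambda>r. 0 \<le> h r) (at_left 1)"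
    by eventually_elim (use extremal_variation[OF assms] in \<open>simp add: h_def\<close>)
  ultimately have "0 \<le> h 1"
    by (rule tendsto_lowerbound) simp
  then show ?thesis
    by (simp add: h_def P_fun_def)
qed

section \<open>Extremal functions\<close>

lemma extremal_double_root:
  assumes "extremal n f" and "Im (taylor_coeff f n) = 0"
    and "norm z = 1" and "Re (P_fun (taylor_coeff f) n z) = 0"
  shows "poly (Q_poly (taylor_coeff f) n) z = 0 \<and> poly (pderiv (Q_poly (taylor_coeff f) n)) z = 0"
proof -
  have on_circle: "\<forall>x. norm x = 1 \<longrightarrow>
      poly (Q_poly (taylor_coeff f) n) x = x ^ n * of_real (Re (P_fun (taylor_coeff f) n x))"
    using assms(2) by (simp add: poly_Q_poly_unimodular)
  then have "poly (Q_poly (taylor_coeff f) n) z = 0"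
    using assms(3,4) by simp
  with on_circle show ?thesis
    using extremal_Re_P_fun_nonneg[OF assms(1)] assms(3)
    by (auto intro: poly_pderiv_eq_0_if_nonneg_on_circle)
qed

lemma extremal_Q_poly_eq:
  assumes "extremal n f" and "Im (taylor_coeff f n) = 0" and "inj_on z {1..n}"
    and "\<forall>j\<in>{1..n}. norm (z j) = 1" and "\<forall>j\<in>{1..n}. Re (P_fun (taylor_coeff f) n (z j)) = 0"
  shows "Q_poly (taylor_coeff f) n = smult (taylor_coeff f 0) (\<Prod>j=1..n. [:-z j, 1:] ^ 2)"
proof -
  let ?Q = "Q_poly (taylor_coeff f) n"
  have "\<forall>j\<in>{1..n}. poly ?Q (z j) = 0 \<and> poly (pderiv ?Q) (z j) = 0"
    using assms(4,5) extremal_double_root[OF assms(1,2)] by blast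
  moreover have "coeff ?Q (2 * n) = taylor_coeff f 0"
    using coeff_Q_poly[of 0 n] by simp
  ultimately show ?thesis
    using eq_smult_prod_power2_linear_if_double_roots[of "{1..n}" z ?Q] assms(3)
    by (simp add: degree_Q_poly)
qed

theorem theorem5:
  fixes f :: "complex \<Rightarrow> complex" and n :: nat and z :: "nat \<Rightarrow> complex"
  assumes "n \<ge> 1"
    and "extremal n f"
    and "Im (taylor_coeff f 0) = 0" and "Re (taylor_coeff f 0) > 0"
    and "Im (taylor_coeff f n) = 0" and "Re (taylor_coeff f n) > 0"
    and "inj_on z {1..n}"
    and "\<forall>j\<in>{1..n}. norm (z j) = 1"
    and "\<forall>j\<in>{1..n}. Re (taylor_coeff f n
            + 2 * (\<Sum>i=1..n. taylor_coeff f (n - i) * z j ^ i)) = 0"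
  shows "(\<forall>k\<le>n. taylor_coeff f k
            = coeff (smult (taylor_coeff f 0) (\<Prod>j=1..n. [:1, - z j:] ^ 2)) k)
         \<and> (\<Prod>j=1..n. z j) = (-1) ^ n
         \<and> taylor_coeff f n
           = taylor_coeff f 0 * of_real (2 + (\<Sum>k=1..n-1. (norm (esym n k z))^2))"
proof -
  let ?a = "taylor_coeff f" and ?E = "\<Prod>j=1..n. [:1, - z j:]"
  obtain c where a0: "?a 0 = of_real c" and "c > 0"
    using assms(3,4) by (intro that[of "Re (?a 0)"]) (simp_all add: complex_eq_iff)
  have Q_eq: "Q_poly ?a n = smult (?a 0) (\<Prod>j=1..n. [:-z j, 1:] ^ 2)"
    using assms(9) by (intro extremal_Q_poly_eq[OF assms(2,5,7,8)]) (simp add: P_fun_def)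
  then have coeffs: "?a k = ?a 0 * coeff (?E ^ 2) k" if "k \<le> n" for k
    using that coeff_Q_poly[OF that, of ?a] coeff_prod_power2_linear_reflect[of "{1..n}" k z] by simp
  have on_circle: "\<forall>x. norm x = 1 \<longrightarrow> poly (smult (of_real c) (\<Prod>j=1..n. [:-z j, 1:] ^ 2)) x
                                  = x ^ card {1..n} * of_real (Re (P_fun ?a n x))"
    using poly_Q_poly_unimodular[of ?a n] assms(5) by (simp add: Q_eq a0)
  have "(\<Prod>j=1..n. z j) = (-1) ^ card {1..n}"
    using extremal_Re_P_fun_nonneg[OF assms(2)]
    by (intro prod_eq_neg_one_power_if_nonneg_on_circle[OF _ assms(8) \<open>c > 0\<close> on_circle]) simp_all
  then have prod_z: "(\<Prod>j=1..n. z j) = (-1) ^ n"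
    by simp
  have "?a n = ?a 0 * of_real (\<Sum>k\<le>n. (norm (esym n k z))\<^sup>2)"
    using coeffs[of n] coeff_square_prod_esym[OF assms(8)] prod_z by (simp add: esym_self flip: power_add)
  moreover have "norm (esym n n z) = 1"
    using prod_z by (simp add: esym_self norm_power)
  ultimately have "?a n = ?a 0 * of_real (2 + (\<Sum>k=1..n-1. (norm (esym n k z))\<^sup>2))"
    using sum_norm_esym_eq[OF assms(1)] by simp
  moreover have "\<forall>k\<le>n. ?a k = coeff (smult (?a 0) (\<Prod>j=1..n. [:1, - z j:] ^ 2)) k"
    unfolding prod_power_distrib[symmetric] coeff_smult using coeffs by blast
  ultimately show ?thesis
    using prod_z by blast
qed

end
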